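(* Let $\mathscr{H}=\mathscr{H}_L\oplus\mathscr{H}_C\oplus\mathscr{H}_R$ be an orthogonal decomposition of a Hilbert space, and let $U$ be a unitary operator on $\mathscr{H}$ of the form $U=(U_{LC}\oplus\mathbb{1}_{\mathscr{H}_R})(\mathbb{1}_{\mathscr{H}_L}\oplus U_{CR})$, where $U_{LC}$ is unitary on $\mathscr{H}_{LC}=\mathscr{H}_L\oplus\mathscr{H}_C$ and $U_{CR}$ is unitary on $\mathscr{H}_{CR}=\mathscr{H}_C\oplus\mathscr{H}_R$. Let $V=V_L\oplus\mathscr{H}_C\oplus V_R$ where $V_L\subset\mathscr{H}_L$ and $V_R\subset\mathscr{H}_R$ are closed subspaces, and put $V_{LC}=V_L\oplus\mathscr{H}_C$, $V_{CR}=\mathscr{H}_C\oplus V_R$. Then the $U$-Schur function $f_V$ of $V$ factorizes as $$f_V=(\mathbb{1}_{V_L}\oplus f^R_{V_{CR}})(f^L_{V_{LC}}\oplus\mathbb{1}_{V_R}),$$ where $f^L_{V_{LC}}$ is the $U_{LC}$-Schur function of $V_{LC}$ and $f^R_{V_{CR}}$ is the $U_{CR}$-Schur function of $V_{CR}$. In particular, the $U$-Schur function of $\mathscr{H}_C$ satisfies $f_{\mathscr{H}_C}=f^R_{\mathscr{H}_C}f^L_{\mathscr{H}_C}$.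
   Context: For a unitary operator $W$ on a Hilbert space $\mathscr{K}$ and a closed subspace $S\subset\mathscr{K}$ with orthogonal projection $P$, the $W$-Carathéodory function of $S$ is $F_S(z)=P(W+z\mathbb{1})(W-z\mathbb{1})^{-1}P$ restricted to $S$ ($z$ in the open unit disk $\mathbb{D}$), and the $W$-Schur function of $S$ is the analytic function on $\mathbb{D}$ with values in operators on $S$ given by $f_S(z)=z^{-1}(F_S(z)-\mathbb{1}_S)(F_S(z)+\mathbb{1}_S)^{-1}$ (equivalently, $f_S(z)=P(W-z(\mathbb{1}-P))^{-1}P$ restricted to $S$). All functions in the factorization are regarded as operators on $V$, with direct sums taken with respect to $V=V_L\oplus V_{CR}=V_{LC}\oplus V_R$; $\mathbb{1}_X$ is the identity on $X$. *)

theory Defs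
  imports "HOL-Analysis.Analysis"
begin

text \<open>A complex Hilbert space: a Banach space (over the reals, from the type class) carrying
  a complex scalar multiplication sc (extending the real one) and a complex inner
  product ip (linear in the second argument) inducing the norm.\<close>

definition complex_hilbert ::
  "(complex \<Rightarrow> 'a::{real_normed_vector,banach} \<Rightarrow> 'a) \<Rightarrow> ('a \<Rightarrow> 'a \<Rightarrow> complex) \<Rightarrow> bool" where
  "complex_hilbert sc ip \<longleftrightarrow>
     (\<forall>x. sc 1 x = x) \<and>
     (\<forall>a b x. sc (a * b) x = sc a (sc b x)) \<and>
     (\<forall>a b x. sc (a + b) x = sc a x + sc b x) \<and>
     (\<forall>a x y. sc a (x + y) = sc a x + sc a y) \<and>
     (\<forall>r x. sc (complex_of_real r) x = r *\<^sub>R x) \<and>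
     (\<forall>x y z. ip x (y + z) = ip x y + ip x z) \<and>
     (\<forall>x y c. ip x (sc c y) = c * ip x y) \<and>
     (\<forall>x y. ip y x = cnj (ip x y)) \<and>
     (\<forall>x. (norm x)\<^sup>2 = Re (ip x x))"

definition csubspace_of :: "(complex \<Rightarrow> 'a::real_vector \<Rightarrow> 'a) \<Rightarrow> 'a set \<Rightarrow> bool" where
  "csubspace_of sc S \<longleftrightarrow> 0 \<in> S \<and> (\<forall>x\<in>S. \<forall>y\<in>S. x + y \<in> S) \<and> (\<forall>c. \<forall>x\<in>S. sc c x \<in> S)"

definition closed_csubspace :: "(complex \<Rightarrow> 'a::real_normed_vector \<Rightarrow> 'a) \<Rightarrow> 'a set \<Rightarrow> bool" where
  "closed_csubspace sc S \<longleftrightarrow> csubspace_of sc S \<and> closed S"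

definition orth :: "('a \<Rightarrow> 'a \<Rightarrow> complex) \<Rightarrow> 'a set \<Rightarrow> 'a set \<Rightarrow> bool" where
  "orth ip A B \<longleftrightarrow> (\<forall>a\<in>A. \<forall>b\<in>B. ip a b = 0)"

definition ssum :: "'a::plus set \<Rightarrow> 'a set \<Rightarrow> 'a set" where
  "ssum A B = {a + b | a b. a \<in> A \<and> b \<in> B}"

definition proj :: "('a::ab_group_add \<Rightarrow> 'a \<Rightarrow> complex) \<Rightarrow> 'a set \<Rightarrow> 'a \<Rightarrow> 'a" where
  "proj ip S x = (THE p. p \<in> S \<and> (\<forall>s\<in>S. ip s (x - p) = 0))"

text \<open>W is a unitary operator on the closed subspace K (values outside K irrelevant).\<close>
definition unitary_on ::
  "(complex \<Rightarrow> 'a::real_vector \<Rightarrow> 'a) \<Rightarrow> ('a \<Rightarrow> 'a \<Rightarrow> complex) \<Rightarrow> 'a set \<Rightarrow> ('a \<Rightarrow> 'a) \<Rightarrow> bool" where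
  "unitary_on sc ip K W \<longleftrightarrow>
     (\<forall>x\<in>K. W x \<in> K) \<and> (\<forall>y\<in>K. \<exists>x\<in>K. W x = y) \<and>
     (\<forall>x\<in>K. \<forall>y\<in>K. W (x + y) = W x + W y) \<and>
     (\<forall>c. \<forall>x\<in>K. W (sc c x) = sc c (W x)) \<and>
     (\<forall>x\<in>K. \<forall>y\<in>K. ip (W x) (W y) = ip x y)"

text \<open>The W-Schur function of the closed subspace S of K, for W unitary on K:
  f_S(z) = P (W - z(1 - P))^{-1} P restricted to S, P the orthogonal projection onto S.
  Here (W - z(1-P))^{-1} x is the unique y in K with W y - z (y - P y) = x.\<close>
definition schur ::
  "(complex \<Rightarrow> 'a::real_vector \<Rightarrow> 'a) \<Rightarrow> ('a \<Rightarrow> 'a \<Rightarrow> complex) \<Rightarrow> ('a \<Rightarrow> 'a) \<Rightarrow> 'a set \<Rightarrow> 'a set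
     \<Rightarrow> complex \<Rightarrow> 'a \<Rightarrow> 'a" where
  "schur sc ip W K S z x =
     proj ip S (THE y. y \<in> K \<and> W y - sc z (y - proj ip S y) = x)"

end

theory Submission
  imports Defs
begin

text \<open>The z-value of the Schur function of S is P_S y, where y solves the resolvent equation
  W y - z (y - P_S y) = x; for |z| < 1 the solution exists and is unique, since W is isometric
  and 1 - P_S is a contraction. Given x in V, solve the U_LC-equation on H_L + H_C with right-hand
  side P_{V_LC} x, obtaining y1, and then the U_CR-equation on H_C + H_R with right-hand side
  P_C y1 + P_{V_R} x, obtaining y2. As U acts first by U_CR and then by U_LC, the vector
  P_L y1 + y2 solves the U-equation: its residual is the sum of the residuals of y1 and y2, which
  lie in H_L and H_R and are orthogonal to V. Its projection onto V, P_{V_L} y1 + P_{V_CR} y2, is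
  exactly the right-hand side of the factorization. The case V_L = V_R = 0 gives the statement
  for H_C.\<close>

lemma linear_coeff_eq_0_of_quadratic_nonneg:
  fixes a b :: real
  assumes "0 \<le> b" and nonneg: "\<And>t. 0 \<le> t\<^sup>2 * b - 2 * t * a"
  shows "a = 0"
proof -
  define t where "t = a / (b + 1)"
  have ta: "t * (b + 1) = a"
    unfolding t_def using assms(1) by simp
  have "t\<^sup>2 * b - 2 * t * a = - t\<^sup>2 * (b + 2)"
    unfolding ta[symmetric] by (simp add: power2_eq_square algebra_simps)
  with nonneg[of t] have "t\<^sup>2 * (b + 2) \<le> 0"
    by simp
  moreover have "0 \<le> t\<^sup>2 * (b + 2)"
    using \<open>0 \<le> b\<close> by simp
  ultimately have "t = 0"
    using \<open>0 \<le> b\<close> by simp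
  then show ?thesis
    using ta by simp
qed

locale complex_hilbert_space =
  fixes sc :: "complex \<Rightarrow> 'a::{real_normed_vector,banach} \<Rightarrow> 'a"
    and ip :: "'a \<Rightarrow> 'a \<Rightarrow> complex"
  assumes hilbert: "complex_hilbert sc ip"
begin

lemma sc_of_real: "sc (complex_of_real r) x = r *\<^sub>R x"
  using hilbert unfolding complex_hilbert_def by blast

lemma sc_add_right: "sc a (x + y) = sc a x + sc a y"
  using hilbert unfolding complex_hilbert_def by blast

lemma ip_add_right: "ip x (y + w) = ip x y + ip x w"
  using hilbert unfolding complex_hilbert_def by blast

lemma ip_sc_right: "ip x (sc c y) = c * ip x y"
  using hilbert unfolding complex_hilbert_def by blast

lemma ip_cnj_commute: "ip y x = cnj (ip x y)"
  using hilbert unfolding complex_hilbert_def by blast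

lemma norm_power2_eq_ip: "(norm x)\<^sup>2 = Re (ip x x)"
  using hilbert unfolding complex_hilbert_def by blast

lemma sc_zero_right [simp]: "sc a 0 = 0"
  using sc_add_right[of a 0 0] by simp

lemma sc_minus_right: "sc a (- x) = - sc a x"
  using sc_add_right[of a x "- x"] by (simp add: add_eq_0_iff)

lemma sc_diff_right: "sc a (x - y) = sc a x - sc a y"
  using sc_add_right[of a x "- y"] sc_minus_right[of a y] by simp

lemma sc_minus_one: "sc (- 1) x = - x"
  using sc_of_real[of "- 1" x] by simp

lemma ip_zero_right [simp]: "ip x 0 = 0"
  using ip_add_right[of x 0 0] by simp

lemma ip_minus_right: "ip x (- y) = - ip x y"
  using ip_add_right[of x y "- y"] by (simp add: add_eq_0_iff)

lemma ip_diff_right: "ip x (y - w) = ip x y - ip x w"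
  using ip_add_right[of x y "- w"] ip_minus_right[of x w] by simp

lemma ip_add_left: "ip (x + y) w = ip x w + ip y w"
  using ip_cnj_commute[of "x + y" w] ip_cnj_commute[of x w] ip_cnj_commute[of y w]
  by (simp add: ip_add_right)

lemma ip_zero_left [simp]: "ip 0 x = 0"
  using ip_cnj_commute[of x 0] by simp

lemma ip_minus_left: "ip (- x) y = - ip x y"
  using ip_add_left[of x "- x" y] by (simp add: add_eq_0_iff)

lemma ip_diff_left: "ip (x - y) w = ip x w - ip y w"
  using ip_add_left[of x "- y" w] ip_minus_left[of y w] by simp

lemma ip_sc_left: "ip (sc c x) y = cnj c * ip x y"
  using ip_cnj_commute[of "sc c x" y] ip_cnj_commute[of x y] by (simp add: ip_sc_right)

lemma ip_scaleR_right: "ip x (r *\<^sub>R y) = complex_of_real r * ip x y"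
  using ip_sc_right[of x "complex_of_real r" y] by (simp add: sc_of_real)

lemma ip_scaleR_left: "ip (r *\<^sub>R x) y = complex_of_real r * ip x y"
  using ip_sc_left[of "complex_of_real r" x y] by (simp add: sc_of_real)

lemma ip_self: "ip x x = complex_of_real ((norm x)\<^sup>2)"
proof -
  have "Im (ip x x) = 0"
    using arg_cong[OF ip_cnj_commute[of x x], of Im] by simp
  then show ?thesis
    using norm_power2_eq_ip[of x] by (simp add: complex_eq_iff)
qed

lemma ip_self_eq_0_iff: "ip x x = 0 \<longleftrightarrow> x = 0"
  by (simp add: ip_self)

lemma ip_eq_0_commute: "ip x y = 0 \<Longrightarrow> ip y x = 0"
  using ip_cnj_commute[of x y] by simp

lemma pythagoras:
  assumes "ip x y = 0"
  shows "(norm (x + y))\<^sup>2 = (norm x)\<^sup>2 + (norm y)\<^sup>2"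
proof -
  have "ip (x + y) (x + y) = ip x x + ip y y"
    using assms ip_eq_0_commute[OF assms] by (simp add: ip_add_left ip_add_right)
  then have "complex_of_real ((norm (x + y))\<^sup>2) = complex_of_real ((norm x)\<^sup>2 + (norm y)\<^sup>2)"
    by (simp add: ip_self)
  then show ?thesis
    using of_real_eq_iff by blast
qed

lemma norm_sc: "norm (sc c x) = cmod c * norm x"
proof -
  have "ip (sc c x) (sc c x) = (c * cnj c) * ip x x"
    by (simp add: ip_sc_left ip_sc_right mult_ac)
  also have "\<dots> = complex_of_real ((cmod c * norm x)\<^sup>2)"
    by (simp add: complex_norm_square[symmetric] ip_self power_mult_distrib)
  finally have "complex_of_real ((norm (sc c x))\<^sup>2) = complex_of_real ((cmod c * norm x)\<^sup>2)"
    by (simp add: ip_self)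
  then show ?thesis
    using of_real_eq_iff power2_eq_imp_eq by (metis mult_nonneg_nonneg norm_ge_zero)
qed

lemma parallelogram:
  fixes x y :: 'a
  shows "(norm (x + y))\<^sup>2 + (norm (x - y))\<^sup>2 = 2 * (norm x)\<^sup>2 + 2 * (norm y)\<^sup>2"
proof -
  have "ip (x + y) (x + y) + ip (x - y) (x - y) = 2 * ip x x + 2 * ip y y"
    by (simp add: ip_add_left ip_add_right ip_diff_left ip_diff_right)
  then have "complex_of_real ((norm (x + y))\<^sup>2 + (norm (x - y))\<^sup>2)
      = complex_of_real (2 * (norm x)\<^sup>2 + 2 * (norm y)\<^sup>2)"
    by (simp add: ip_self)
  then show ?thesis
    using of_real_eq_iff by blast
qed

abbreviation csub :: "'a set \<Rightarrow> bool" where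
  "csub S \<equiv> csubspace_of sc S"

lemma csub_zero: "csub S \<Longrightarrow> 0 \<in> S"
  and csub_add: "csub S \<Longrightarrow> x \<in> S \<Longrightarrow> y \<in> S \<Longrightarrow> x + y \<in> S"
  and csub_sc: "csub S \<Longrightarrow> x \<in> S \<Longrightarrow> sc c x \<in> S"
  unfolding csubspace_of_def by auto

lemma csub_diff: "csub S \<Longrightarrow> x \<in> S \<Longrightarrow> y \<in> S \<Longrightarrow> x - y \<in> S"
  using csub_add[of S x "- y"] csub_sc[of S y "- 1"] by (simp add: sc_minus_one)

lemma csub_scaleR: "csub S \<Longrightarrow> x \<in> S \<Longrightarrow> r *\<^sub>R x \<in> S"
  using csub_sc[of S x "complex_of_real r"] by (simp add: sc_of_real)

lemma csub_UNIV: "csub UNIV"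
  unfolding csubspace_of_def by simp

text \<open>Closedness is only needed to construct projections; sums of orthogonal subspaces are
  handled through this weaker notion, which avoids proving that they are closed.\<close>

definition has_orth_proj :: "'a set \<Rightarrow> bool" where
  "has_orth_proj S \<longleftrightarrow> csub S \<and> (\<forall>x. \<exists>p\<in>S. \<forall>s\<in>S. ip s (x - p) = 0)"

lemma has_orth_proj_csub: "has_orth_proj S \<Longrightarrow> csub S"
  unfolding has_orth_proj_def by blast

lemma proj_eqI:
  assumes "csub S" "p \<in> S" "\<forall>s\<in>S. ip s (x - p) = 0"
  shows "proj ip S x = p"
  unfolding proj_def
proof (rule the_equality)
  show "p \<in> S \<and> (\<forall>s\<in>S. ip s (x - p) = 0)"
    using assms by blast
next
  fix q
  assume q: "q \<in> S \<and> (\<forall>s\<in>S. ip s (x - q) = 0)"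
  then have "p - q \<in> S"
    using assms csub_diff by blast
  then have "ip (p - q) (x - q) - ip (p - q) (x - p) = 0"
    using q assms by simp
  then have "ip (p - q) (p - q) = 0"
    by (simp add: ip_diff_right)
  then show "q = p"
    by (simp add: ip_self_eq_0_iff)
qed

lemma
  assumes "has_orth_proj S"
  shows proj_in: "proj ip S x \<in> S"
    and proj_residual_orth: "s \<in> S \<Longrightarrow> ip s (x - proj ip S x) = 0"
proof -
  obtain p where p: "p \<in> S" "\<forall>s\<in>S. ip s (x - p) = 0"
    using assms unfolding has_orth_proj_def by blast
  with proj_eqI[OF has_orth_proj_csub[OF assms] p] show "proj ip S x \<in> S"
    and "s \<in> S \<Longrightarrow> ip s (x - proj ip S x) = 0"
    by auto
qed

lemma proj_id: "csub S \<Longrightarrow> s \<in> S \<Longrightarrow> proj ip S s = s"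
  by (rule proj_eqI) auto

lemma proj_eq_of_orth:
  assumes "csub A" "a \<in> A" "orth ip A B" "b \<in> B"
  shows "proj ip A (a + b) = a"
  using assms by (intro proj_eqI) (auto simp: orth_def)

lemma proj_add:
  assumes "has_orth_proj S"
  shows "proj ip S (x + y) = proj ip S x + proj ip S y"
proof (rule proj_eqI)
  show "csub S" "proj ip S x + proj ip S y \<in> S"
    using assms has_orth_proj_csub csub_add proj_in by blast+
  have "x + y - (proj ip S x + proj ip S y) = (x - proj ip S x) + (y - proj ip S y)"
    by simp
  then show "\<forall>s\<in>S. ip s (x + y - (proj ip S x + proj ip S y)) = 0"
    using proj_residual_orth[OF assms] by (simp only: ip_add_right) simp
qed

lemma proj_sc:
  assumes "has_orth_proj S"
  shows "proj ip S (sc c x) = sc c (proj ip S x)"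
proof (rule proj_eqI)
  show "csub S" "sc c (proj ip S x) \<in> S"
    using assms has_orth_proj_csub csub_sc proj_in by blast+
  show "\<forall>s\<in>S. ip s (sc c x - sc c (proj ip S x)) = 0"
    using proj_residual_orth[OF assms] by (simp add: ip_sc_right flip: sc_diff_right)
qed

lemma proj_diff:
  assumes "has_orth_proj S"
  shows "proj ip S (x - y) = proj ip S x - proj ip S y"
  using proj_add[OF assms, of x "- y"] proj_sc[OF assms, of "- 1" y] by (simp add: sc_minus_one)

lemma
  assumes "has_orth_proj S"
  shows norm_proj_le: "norm (proj ip S x) \<le> norm x"
    and norm_proj_residual_le: "norm (x - proj ip S x) \<le> norm x"
proof -
  have "ip (proj ip S x) (x - proj ip S x) = 0"
    using proj_residual_orth[OF assms] proj_in[OF assms] by blast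
  from pythagoras[OF this]
  have "(norm (proj ip S x))\<^sup>2 + (norm (x - proj ip S x))\<^sup>2 = (norm x)\<^sup>2"
    by simp
  then show "norm (proj ip S x) \<le> norm x" "norm (x - proj ip S x) \<le> norm x"
    by (smt (verit) norm_ge_zero power2_le_imp_le zero_le_power2)+
qed

lemma nearest_point_orthogonal:
  assumes S: "csub S" and p: "p \<in> S" and nearest: "\<And>s. s \<in> S \<Longrightarrow> norm (x - p) \<le> norm (x - s)"
    and s: "s \<in> S"
  shows "ip s (x - p) = 0"
proof -
  define r where "r = x - p"
  have Re_zero: "Re (ip s' r) = 0" if s': "s' \<in> S" for s'
  proof (rule linear_coeff_eq_0_of_quadratic_nonneg)
    show "0 \<le> (norm s')\<^sup>2"
      by simp
    fix t
    have "p + t *\<^sub>R s' \<in> S"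
      using S p s' csub_add csub_scaleR by blast
    then have "(norm r)\<^sup>2 \<le> (norm (r - t *\<^sub>R s'))\<^sup>2"
      using nearest[of "p + t *\<^sub>R s'"] unfolding r_def by (simp add: diff_diff_eq)
    also have "(norm (r - t *\<^sub>R s'))\<^sup>2
        = (norm r)\<^sup>2 + t\<^sup>2 * (norm s')\<^sup>2 - 2 * t * Re (ip s' r)"
      unfolding norm_power2_eq_ip
      by (simp add: ip_diff_left ip_diff_right ip_scaleR_left ip_scaleR_right
          ip_cnj_commute[of r s'] power2_eq_square algebra_simps)
    finally show "0 \<le> t\<^sup>2 * (norm s')\<^sup>2 - 2 * t * Re (ip s' r)"
      by simp
  qed
  have "Re (ip (sc \<i> s) r) = 0"
    using Re_zero S s csub_sc by blast
  then have "Im (ip s r) = 0"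
    by (simp add: ip_sc_left)
  with Re_zero[OF s] show ?thesis
    unfolding r_def by (simp add: complex_eq_iff)
qed

text \<open>Parallelogram law applied to x - a, x - b, with the midpoint of a and b in S.\<close>

lemma near_minimizers_close:
  assumes S: "csub S" and a: "a \<in> S" and b: "b \<in> S"
    and lower: "\<And>s. s \<in> S \<Longrightarrow> d \<le> (norm (x - s))\<^sup>2"
  shows "(norm (a - b))\<^sup>2 \<le> 2 * ((norm (x - a))\<^sup>2 - d) + 2 * ((norm (x - b))\<^sup>2 - d)"
proof -
  define m where "m = (1/2) *\<^sub>R (a + b)"
  have "m \<in> S"
    unfolding m_def using S a b csub_add csub_scaleR by blast
  moreover have "(x - a) + (x - b) = 2 *\<^sub>R (x - m)"
    unfolding m_def by (simp add: scaleR_2 algebra_simps)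
  then have "(norm ((x - a) + (x - b)))\<^sup>2 = 4 * (norm (x - m))\<^sup>2"
    by (simp add: power_mult_distrib)
  moreover have "norm ((x - a) - (x - b)) = norm (a - b)"
    by (simp add: norm_minus_commute)
  ultimately show ?thesis
    using parallelogram[of "x - a" "x - b"] lower[of m] by simp
qed

lemma Cauchy_near_minimizers:
  assumes S: "csub S" and q: "\<And>n. q n \<in> S"
    and lower: "\<And>s. s \<in> S \<Longrightarrow> d \<le> (norm (x - s))\<^sup>2"
    and near: "\<And>n. (norm (x - q n))\<^sup>2 < d + inverse (real (Suc n))"
  shows "Cauchy q"
proof (rule CauchyI)
  fix e :: real
  assume "0 < e"
  then obtain N :: nat where "inverse (real (Suc N)) < e\<^sup>2 / 4"
    using reals_Archimedean[of "e\<^sup>2 / 4"] by auto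
  then have N: "4 * inverse (real (Suc N)) < e\<^sup>2"
    by simp
  show "\<exists>M. \<forall>m\<ge>M. \<forall>n\<ge>M. norm (q m - q n) < e"
  proof (intro exI allI impI)
    fix m n
    assume "N \<le> m" "N \<le> n"
    then have "inverse (real (Suc m)) \<le> inverse (real (Suc N))"
      "inverse (real (Suc n)) \<le> inverse (real (Suc N))"
      by (auto intro!: le_imp_inverse_le)
    moreover have "(norm (q m - q n))\<^sup>2
        \<le> 2 * ((norm (x - q m))\<^sup>2 - d) + 2 * ((norm (x - q n))\<^sup>2 - d)"
      using near_minimizers_close[OF S q q lower] .
    ultimately have "(norm (q m - q n))\<^sup>2 < e\<^sup>2"
      using N near[of m] near[of n] by (smt (verit))
    with \<open>0 < e\<close> show "norm (q m - q n) < e"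
      by (simp add: power_less_imp_less_base)
  qed
qed

lemma nearest_point_exists:
  assumes S: "csub S" "closed S"
  shows "\<exists>p\<in>S. \<forall>s\<in>S. norm (x - p) \<le> norm (x - s)"
proof -
  define f where "f s = (norm (x - s))\<^sup>2" for s
  define d where "d = Inf (f ` S)"
  have bdd: "bdd_below (f ` S)"
    unfolding f_def bdd_below_def by (auto intro!: exI[of _ 0])
  have d_le: "d \<le> f s" if "s \<in> S" for s
    unfolding d_def using cInf_lower[OF _ bdd] that by simp
  have "\<exists>s\<in>S. f s < d + inverse (real (Suc n))" for n
    unfolding d_def using cInf_lessD[of "f ` S"] csub_zero[OF S(1)] by fastforce
  then obtain q where q: "\<And>n. q n \<in> S" "\<And>n. f (q n) < d + inverse (real (Suc n))"
    by metis
  have "Cauchy q"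
    using Cauchy_near_minimizers[OF S(1) q(1) d_le[unfolded f_def] q(2)[unfolded f_def]] .
  then obtain p where p: "q \<longlonglongrightarrow> p"
    using Cauchy_convergent_iff convergent_def by blast
  have "p \<in> S"
    using closed_sequentially[OF S(2) q(1) p] .
  have "(\<lambda>n. f (q n)) \<longlonglongrightarrow> f p"
    unfolding f_def by (intro tendsto_intros p)
  moreover have "(\<lambda>n. d + inverse (real (Suc n))) \<longlonglongrightarrow> d"
    using tendsto_add[OF tendsto_const LIMSEQ_inverse_real_of_nat, of d] by simp
  ultimately have "f p \<le> d"
    using LIMSEQ_le q(2) less_imp_le by blast
  then have "\<forall>s\<in>S. (norm (x - p))\<^sup>2 \<le> (norm (x - s))\<^sup>2"
    using d_le unfolding f_def by (blast intro: order_trans)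
  then have "\<forall>s\<in>S. norm (x - p) \<le> norm (x - s)"
    using power2_le_imp_le norm_ge_zero by blast
  with \<open>p \<in> S\<close> show ?thesis
    by blast
qed

lemma closed_csubspace_has_orth_proj:
  assumes "closed_csubspace sc S"
  shows "has_orth_proj S"
  unfolding has_orth_proj_def
proof (intro conjI allI)
  show S: "csub S"
    using assms unfolding closed_csubspace_def by blast
  fix x
  obtain p where "p \<in> S" "\<forall>s\<in>S. norm (x - p) \<le> norm (x - s)"
    using nearest_point_exists[OF S] assms unfolding closed_csubspace_def by blast
  with nearest_point_orthogonal[OF S] show "\<exists>p\<in>S. \<forall>s\<in>S. ip s (x - p) = 0"
    by blast
qed

lemma ssum_mem: "a \<in> A \<Longrightarrow> b \<in> B \<Longrightarrow> a + b \<in> ssum A B"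
  unfolding ssum_def by blast

lemma csub_ssum:
  assumes "csub A" "csub B"
  shows "csub (ssum A B)"
  unfolding csubspace_of_def
proof (intro conjI ballI allI)
  show "0 \<in> ssum A B"
    using ssum_mem[OF csub_zero[OF assms(1)] csub_zero[OF assms(2)]] by simp
next
  fix x y
  assume "x \<in> ssum A B" "y \<in> ssum A B"
  then obtain a b a' b' where "x = a + b" "y = a' + b'" "a \<in> A" "b \<in> B" "a' \<in> A" "b' \<in> B"
    unfolding ssum_def by blast
  then show "x + y \<in> ssum A B"
    using ssum_mem[of "a + a'" A "b + b'" B] csub_add assms by (simp add: algebra_simps)
next
  fix c x
  assume "x \<in> ssum A B"
  then obtain a b where "x = a + b" "a \<in> A" "b \<in> B"
    unfolding ssum_def by blast
  then show "sc c x \<in> ssum A B"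
    using ssum_mem[of "sc c a" A "sc c b" B] csub_sc assms by (simp add: sc_add_right)
qed

lemma ssum_zero_left: "csub A \<Longrightarrow> ssum {0} A = A"
  and ssum_zero_right: "csub A \<Longrightarrow> ssum A {0} = A"
  unfolding ssum_def by (auto dest: csub_zero)

lemma ssum_subset_left: "csub B \<Longrightarrow> A \<subseteq> ssum A B"
  and ssum_subset_right: "csub A \<Longrightarrow> B \<subseteq> ssum A B"
  using ssum_mem[of _ A 0 B] ssum_mem[of 0 A _ B] csub_zero by fastforce+

lemma closed_csubspace_zero: "closed_csubspace sc {0}"
  unfolding closed_csubspace_def csubspace_of_def by simp

lemma proj_zero_space: "proj ip {0} x = 0"
  using closed_csubspace_zero unfolding closed_csubspace_def by (intro proj_eqI) simp_all

lemma orth_commute: "orth ip A B \<Longrightarrow> orth ip B A"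
  unfolding orth_def using ip_eq_0_commute by blast

lemma orth_ssum_left: "orth ip A C \<Longrightarrow> orth ip B C \<Longrightarrow> orth ip (ssum A B) C"
  unfolding orth_def ssum_def by (auto simp: ip_add_left)

lemma orth_ssum_right: "orth ip C A \<Longrightarrow> orth ip C B \<Longrightarrow> orth ip C (ssum A B)"
  using orth_ssum_left orth_commute by blast

lemma orth_mono: "orth ip A B \<Longrightarrow> A' \<subseteq> A \<Longrightarrow> B' \<subseteq> B \<Longrightarrow> orth ip A' B'"
  unfolding orth_def by blast

lemma
  assumes A: "has_orth_proj A" and B: "has_orth_proj B" and AB: "orth ip A B"
  shows has_orth_proj_ssum: "has_orth_proj (ssum A B)"
    and proj_ssum: "proj ip (ssum A B) x = proj ip A x + proj ip B x"
proof -
  have csub: "csub (ssum A B)"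
    using csub_ssum has_orth_proj_csub A B by blast
  have mem: "proj ip A y + proj ip B y \<in> ssum A B" for y
    using ssum_mem[OF proj_in[OF A] proj_in[OF B]] .
  have orth: "\<forall>s\<in>ssum A B. ip s (y - (proj ip A y + proj ip B y)) = 0" for y
  proof
    fix s
    assume "s \<in> ssum A B"
    then obtain a b where s: "s = a + b" "a \<in> A" "b \<in> B"
      unfolding ssum_def by blast
    have "ip a (y - proj ip A y) = 0" "ip b (y - proj ip B y) = 0"
      using proj_residual_orth A B s by blast+
    moreover have "ip a (proj ip B y) = 0" "ip b (proj ip A y) = 0"
      using AB s proj_in[OF A] proj_in[OF B] ip_eq_0_commute unfolding orth_def by blast+
    moreover have "y - (proj ip A y + proj ip B y) = (y - proj ip A y) - proj ip B y"
      "y - (proj ip A y + proj ip B y) = (y - proj ip B y) - proj ip A y"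
      by simp_all
    ultimately show "ip s (y - (proj ip A y + proj ip B y)) = 0"
      using s by (simp add: ip_add_left ip_add_right ip_diff_right)
  qed
  show "has_orth_proj (ssum A B)"
    unfolding has_orth_proj_def using csub mem orth by blast
  show "proj ip (ssum A B) x = proj ip A x + proj ip B x"
    using proj_eqI[OF csub mem orth] .
qed

definition isometry_on :: "'a set \<Rightarrow> ('a \<Rightarrow> 'a) \<Rightarrow> bool" where
  "isometry_on K W \<longleftrightarrow>
     (\<forall>a\<in>K. \<forall>b\<in>K. W (a - b) = W a - W b) \<and> (\<forall>a\<in>K. norm (W a) = norm a)"

lemma isometry_onD:
  "isometry_on K W \<Longrightarrow> a \<in> K \<Longrightarrow> b \<in> K \<Longrightarrow> W (a - b) = W a - W b"
  "isometry_on K W \<Longrightarrow> a \<in> K \<Longrightarrow> norm (W a) = norm a"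
  unfolding isometry_on_def by blast+

lemma unitary_on_maps_into: "unitary_on sc ip K W \<Longrightarrow> x \<in> K \<Longrightarrow> W x \<in> K"
  and unitary_on_surj: "unitary_on sc ip K W \<Longrightarrow> y \<in> K \<Longrightarrow> \<exists>x\<in>K. W x = y"
  unfolding unitary_on_def by blast+

lemma unitary_on_isometry_on:
  assumes W: "unitary_on sc ip K W" and K: "csub K"
  shows "isometry_on K W"
  unfolding isometry_on_def
proof (intro conjI ballI)
  fix a b
  assume "a \<in> K" "b \<in> K"
  then have "W (a - b + b) = W (a - b) + W b"
    using W csub_diff[OF K] unfolding unitary_on_def by blast
  then show "W (a - b) = W a - W b"
    by (simp add: algebra_simps)
next
  fix a
  assume "a \<in> K"
  then have "ip (W a) (W a) = ip a a"
    using W unfolding unitary_on_def by blast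
  then have "(norm (W a))\<^sup>2 = (norm a)\<^sup>2"
    by (simp add: norm_power2_eq_ip)
  then show "norm (W a) = norm a"
    by (simp add: power2_eq_imp_eq)
qed

lemma isometry_on_dist:
  assumes "isometry_on K W" "csub K" "a \<in> K" "b \<in> K"
  shows "dist (W a) (W b) = dist a b"
  using isometry_onD(1)[OF assms(1,3,4)] isometry_onD(2)[OF assms(1) csub_diff[OF assms(2,3,4)]]
  by (simp add: dist_norm)

lemma isometry_on_UNIV_comp:
  "isometry_on UNIV V \<Longrightarrow> isometry_on UNIV W \<Longrightarrow> isometry_on UNIV (\<lambda>x. V (W x))"
  unfolding isometry_on_def by simp

lemma isometry_on_unitary_extension:
  assumes K: "has_orth_proj K" and K': "has_orth_proj K'" and KK': "orth ip K K'"
    and decomp: "\<And>x. proj ip K x + proj ip K' x = x"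
    and W: "unitary_on sc ip K W"
  shows "isometry_on UNIV (\<lambda>x. W (proj ip K x) + proj ip K' x)"
  unfolding isometry_on_def
proof (intro conjI ballI)
  have iso: "isometry_on K W"
    using unitary_on_isometry_on[OF W has_orth_proj_csub[OF K]] .
  fix a b
  show "W (proj ip K (a - b)) + proj ip K' (a - b)
      = (W (proj ip K a) + proj ip K' a) - (W (proj ip K b) + proj ip K' b)"
    using isometry_onD(1)[OF iso proj_in[OF K] proj_in[OF K]] by (simp add: proj_diff K K')
next
  have iso: "isometry_on K W"
    using unitary_on_isometry_on[OF W has_orth_proj_csub[OF K]] .
  fix a
  have "ip (W (proj ip K a)) (proj ip K' a) = 0" "ip (proj ip K a) (proj ip K' a) = 0"
    using KK' proj_in[OF K] proj_in[OF K'] unitary_on_maps_into[OF W] unfolding orth_def by blast+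
  then have "(norm (W (proj ip K a) + proj ip K' a))\<^sup>2 = (norm (proj ip K a + proj ip K' a))\<^sup>2"
    using isometry_onD(2)[OF iso proj_in[OF K]] by (simp add: pythagoras)
  then show "norm (W (proj ip K a) + proj ip K' a) = norm a"
    by (simp add: decomp power2_eq_imp_eq)
qed

lemma resolvent_unique:
  assumes K: "csub K" and W: "isometry_on K W" and S: "has_orth_proj S" and z: "cmod z < 1"
    and y1: "y1 \<in> K" "W y1 - sc z (y1 - proj ip S y1) = x"
    and y2: "y2 \<in> K" "W y2 - sc z (y2 - proj ip S y2) = x"
  shows "y1 = y2"
proof -
  define d where "d = y1 - y2"
  have "d \<in> K"
    unfolding d_def using csub_diff[OF K y1(1) y2(1)] .
  have "W d = sc z (y1 - proj ip S y1) - sc z (y2 - proj ip S y2)"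
    unfolding d_def using isometry_onD(1)[OF W y1(1) y2(1)] y1(2) y2(2)
    by (simp add: algebra_simps)
  also have "\<dots> = sc z (d - proj ip S d)"
    unfolding d_def by (simp add: proj_diff[OF S] algebra_simps flip: sc_diff_right)
  finally have "norm d = cmod z * norm (d - proj ip S d)"
    using isometry_onD(2)[OF W \<open>d \<in> K\<close>] by (simp add: norm_sc)
  also have "\<dots> \<le> cmod z * norm d"
    using norm_proj_residual_le[OF S] by (simp add: mult_left_mono)
  finally have "(1 - cmod z) * norm d \<le> 0"
    by (simp add: algebra_simps)
  with z have "norm d \<le> 0"
    by (simp add: mult_le_0_iff)
  then show ?thesis
    unfolding d_def by simp
qed

text \<open>A solution is a fixed point of y \<mapsto> W\<inverse> (x + z (1 - P_S) P_K y), a contraction with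
  constant |z|.\<close>

lemma resolvent_exists:
  assumes K: "has_orth_proj K" and S: "has_orth_proj S" "S \<subseteq> K" and W: "unitary_on sc ip K W"
    and z: "cmod z < 1" and x: "x \<in> K"
  shows "\<exists>y\<in>K. W y - sc z (y - proj ip S y) = x"
proof -
  have csub: "csub K"
    using has_orth_proj_csub[OF K] .
  have iso: "isometry_on K W"
    using unitary_on_isometry_on[OF W csub] .
  define Winv where "Winv = inv_into K W"
  have Winv: "Winv u \<in> K" "W (Winv u) = u" if "u \<in> K" for u
    using unitary_on_surj[OF W that] unfolding Winv_def by (auto intro: inv_into_into f_inv_into_f)
  define Q where "Q y = proj ip K y - proj ip S (proj ip K y)" for y
  define g where "g y = x + sc z (Q y)" for y
  have g_in: "g y \<in> K" for y
  proof -
    have "proj ip S (proj ip K y) \<in> K"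
      using proj_in[OF S(1)] S(2) by blast
    then have "Q y \<in> K"
      unfolding Q_def using csub_diff[OF csub proj_in[OF K]] by blast
    then show ?thesis
      unfolding g_def using csub_add[OF csub x] csub_sc[OF csub] by blast
  qed
  have Q_diff: "Q a - Q b = proj ip K (a - b) - proj ip S (proj ip K (a - b))" for a b
    unfolding Q_def by (simp add: proj_diff K S)
  have "dist (Winv (g a)) (Winv (g b)) \<le> cmod z * dist a b" for a b
  proof -
    have "dist (Winv (g a)) (Winv (g b)) = norm (g a - g b)"
      using isometry_on_dist[OF iso csub Winv(1) Winv(1)] Winv(2) g_in by (simp add: dist_norm)
    also have "\<dots> = cmod z * norm (Q a - Q b)"
      unfolding g_def by (simp add: norm_sc flip: sc_diff_right)
    also have "\<dots> \<le> cmod z * norm (a - b)"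
    proof (rule mult_left_mono)
      show "norm (Q a - Q b) \<le> norm (a - b)"
        unfolding Q_diff
        using norm_proj_residual_le[OF S(1)] norm_proj_le[OF K] by (rule order_trans)
    qed simp
    finally show ?thesis
      by (simp add: dist_norm)
  qed
  then obtain y where y: "Winv (g y) = y"
    using banach_fix_type[of "cmod z" "\<lambda>y. Winv (g y)"] z by auto
  then have "y \<in> K" "W y = g y"
    using Winv[OF g_in] by metis+
  moreover from \<open>y \<in> K\<close> have "Q y = y - proj ip S y"
    unfolding Q_def using proj_id[OF csub] by simp
  ultimately show ?thesis
    unfolding g_def by (intro bexI[of _ y]) simp_all
qed

lemma schur_eqI:
  assumes "csub K" "isometry_on K W" "has_orth_proj S" "cmod z < 1"
    and "y \<in> K" "W y - sc z (y - proj ip S y) = x"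
  shows "schur sc ip W K S z x = proj ip S y"
proof -
  have "(THE y. y \<in> K \<and> W y - sc z (y - proj ip S y) = x) = y"
    using assms resolvent_unique by (intro the_equality) blast+
  then show ?thesis
    unfolding schur_def by simp
qed

lemma schur_in: "has_orth_proj S \<Longrightarrow> schur sc ip W K S z x \<in> S"
  unfolding schur_def using proj_in by blast

end

locale unitary_three_block = complex_hilbert_space sc ip
  for sc :: "complex \<Rightarrow> 'a::{real_normed_vector,banach} \<Rightarrow> 'a" and ip +
  fixes HL HC HR :: "'a set" and ULC UCR U :: "'a \<Rightarrow> 'a"
  assumes closed_HL: "closed_csubspace sc HL"
    and closed_HC: "closed_csubspace sc HC"
    and closed_HR: "closed_csubspace sc HR"
    and orth_LC: "orth ip HL HC" and orth_CR: "orth ip HC HR" and orth_LR: "orth ip HL HR"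
    and decomp: "ssum (ssum HL HC) HR = UNIV"
    and unitary_LC: "unitary_on sc ip (ssum HL HC) ULC"
    and unitary_CR: "unitary_on sc ip (ssum HC HR) UCR"
    and U_eq: "\<forall>x. U x =
         (let y = proj ip HL x + UCR (proj ip (ssum HC HR) x)
          in ULC (proj ip (ssum HL HC) y) + proj ip HR y)"
begin

abbreviation "PL \<equiv> proj ip HL"
abbreviation "PC \<equiv> proj ip HC"
abbreviation "PR \<equiv> proj ip HR"
abbreviation "KLC \<equiv> ssum HL HC"
abbreviation "KCR \<equiv> ssum HC HR"

lemma has_orth_proj_HL: "has_orth_proj HL"
  and has_orth_proj_HC: "has_orth_proj HC"
  and has_orth_proj_HR: "has_orth_proj HR"
  using closed_HL closed_HC closed_HR by (simp_all add: closed_csubspace_has_orth_proj)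

lemma has_orth_proj_KLC: "has_orth_proj KLC"
  and proj_KLC: "proj ip KLC x = PL x + PC x"
  by (rule has_orth_proj_ssum[OF has_orth_proj_HL has_orth_proj_HC orth_LC]
      proj_ssum[OF has_orth_proj_HL has_orth_proj_HC orth_LC])+

lemma has_orth_proj_KCR: "has_orth_proj KCR"
  and proj_KCR: "proj ip KCR x = PC x + PR x"
  by (rule has_orth_proj_ssum[OF has_orth_proj_HC has_orth_proj_HR orth_CR]
      proj_ssum[OF has_orth_proj_HC has_orth_proj_HR orth_CR])+

lemma orth_HL_KCR: "orth ip HL KCR"
  using orth_ssum_right[OF orth_LC orth_LR] .

lemma orth_KLC_HR: "orth ip KLC HR"
  using orth_ssum_left[OF orth_LR orth_CR] .

lemma proj_three_sum: "PL x + PC x + PR x = x"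
proof -
  have "proj ip (ssum KLC HR) x = x"
    using proj_id csub_UNIV decomp by simp
  then show ?thesis
    using proj_ssum[OF has_orth_proj_KLC has_orth_proj_HR orth_KLC_HR] by (simp add: proj_KLC)
qed

lemma isometry_on_U: "isometry_on UNIV U"
proof -
  have "isometry_on UNIV (\<lambda>x. UCR (proj ip KCR x) + PL x)"
    using proj_three_sum
    by (intro isometry_on_unitary_extension has_orth_proj_KCR has_orth_proj_HL unitary_CR
        orth_commute[OF orth_HL_KCR]) (simp add: proj_KCR algebra_simps)
  moreover have "isometry_on UNIV (\<lambda>y. ULC (proj ip KLC y) + PR y)"
    using proj_three_sum
    by (intro isometry_on_unitary_extension has_orth_proj_KLC has_orth_proj_HR unitary_LC
        orth_KLC_HR) (simp add: proj_KLC)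
  moreover have "U = (\<lambda>x. (\<lambda>y. ULC (proj ip KLC y) + PR y) (UCR (proj ip KCR x) + PL x))"
    using U_eq by (simp add: Let_def add.commute fun_eq_iff)
  ultimately show ?thesis
    using isometry_on_UNIV_comp by simp
qed

lemma KLC_split: "y \<in> KLC \<Longrightarrow> PL y + PC y = y"
  using proj_id[OF has_orth_proj_csub[OF has_orth_proj_KLC]] by (simp add: proj_KLC)

lemma KCR_split: "y \<in> KCR \<Longrightarrow> PC y + PR y = y"
  using proj_id[OF has_orth_proj_csub[OF has_orth_proj_KCR]] by (simp add: proj_KCR)

lemma U_glue:
  assumes y1: "y1 \<in> KLC" and y2: "y2 \<in> KCR" and h: "h \<in> HR" and UCR_y2: "UCR y2 = PC y1 + h"
  shows "U (PL y1 + y2) = ULC y1 + h"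
proof -
  note csub = has_orth_proj_csub
  have PL_y1: "PL y1 \<in> HL"
    using proj_in[OF has_orth_proj_HL] .
  have "PL (PL y1 + y2) = PL y1"
    using proj_eq_of_orth[OF csub[OF has_orth_proj_HL] PL_y1 orth_HL_KCR y2] .
  moreover have "proj ip KCR (PL y1 + y2) = y2"
    using proj_eq_of_orth[OF csub[OF has_orth_proj_KCR] y2 orth_commute[OF orth_HL_KCR] PL_y1]
    by (simp add: add.commute)
  ultimately have "PL (PL y1 + y2) + UCR (proj ip KCR (PL y1 + y2)) = y1 + h"
    using KLC_split[OF y1] UCR_y2 by (simp add: add.assoc)
  then show ?thesis
    using U_eq proj_eq_of_orth[OF csub[OF has_orth_proj_KLC] y1 orth_KLC_HR h]
      proj_eq_of_orth[OF csub[OF has_orth_proj_HR] h orth_commute[OF orth_KLC_HR] y1]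
    by (simp add: Let_def add.commute)
qed

end

locale unitary_three_block_restriction = unitary_three_block +
  fixes VL VR :: "'a set"
  assumes closed_VL: "closed_csubspace sc VL" and VL_subset: "VL \<subseteq> HL"
    and closed_VR: "closed_csubspace sc VR" and VR_subset: "VR \<subseteq> HR"
begin

abbreviation "PVL \<equiv> proj ip VL"
abbreviation "PVR \<equiv> proj ip VR"
abbreviation "SLC \<equiv> ssum VL HC"
abbreviation "SCR \<equiv> ssum HC VR"
abbreviation "V \<equiv> ssum SLC VR"

lemma has_orth_proj_VL: "has_orth_proj VL"
  and has_orth_proj_VR: "has_orth_proj VR"
  using closed_VL closed_VR by (simp_all add: closed_csubspace_has_orth_proj)

lemma orth_VL_HC: "orth ip VL HC"
  and orth_HC_VR: "orth ip HC VR"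
  and orth_VL_HR: "orth ip VL HR"
  and orth_HL_VR: "orth ip HL VR"
  using orth_mono[OF orth_LC VL_subset order_refl] orth_mono[OF orth_CR order_refl VR_subset]
    orth_mono[OF orth_LR VL_subset order_refl] orth_mono[OF orth_LR order_refl VR_subset] .

lemma orth_VL_SCR: "orth ip VL SCR"
  using orth_ssum_right[OF orth_VL_HC orth_mono[OF orth_VL_HR order_refl VR_subset]] .

lemma has_orth_proj_SLC: "has_orth_proj SLC"
  and proj_SLC: "proj ip SLC x = PVL x + PC x"
  by (rule has_orth_proj_ssum[OF has_orth_proj_VL has_orth_proj_HC orth_VL_HC]
      proj_ssum[OF has_orth_proj_VL has_orth_proj_HC orth_VL_HC])+

lemma has_orth_proj_SCR: "has_orth_proj SCR"
  and proj_SCR: "proj ip SCR x = PC x + PVR x"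
  by (rule has_orth_proj_ssum[OF has_orth_proj_HC has_orth_proj_VR orth_HC_VR]
      proj_ssum[OF has_orth_proj_HC has_orth_proj_VR orth_HC_VR])+

lemma has_orth_proj_V: "has_orth_proj V"
  and proj_V: "proj ip V x = proj ip SLC x + PVR x"
proof -
  have "orth ip SLC VR"
    using orth_ssum_left[OF orth_mono[OF orth_HL_VR VL_subset order_refl] orth_HC_VR] .
  then show "has_orth_proj V" "proj ip V x = proj ip SLC x + PVR x"
    by (rule has_orth_proj_ssum[OF has_orth_proj_SLC has_orth_proj_VR]
        proj_ssum[OF has_orth_proj_SLC has_orth_proj_VR])+
qed

lemma residual_SLC: "y \<in> KLC \<Longrightarrow> y - proj ip SLC y = PL y - PVL y"
  using KLC_split[of y] by (simp add: proj_SLC algebra_simps)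

lemma residual_SCR: "y \<in> KCR \<Longrightarrow> y - proj ip SCR y = PR y - PVR y"
  using KCR_split[of y] by (simp add: proj_SCR algebra_simps)

lemma residual_SLC_orth_V:
  assumes "y \<in> KLC"
  shows "orth ip V {y - proj ip SLC y}"
proof -
  define r where "r = PL y - PVL y"
  have "PVL y \<in> HL"
    using proj_in[OF has_orth_proj_VL] VL_subset by blast
  then have "{r} \<subseteq> HL"
    unfolding r_def using csub_diff[OF has_orth_proj_csub[OF has_orth_proj_HL]]
      proj_in[OF has_orth_proj_HL] by simp
  then have "orth ip HC {r}" "orth ip VR {r}"
    using orth_mono[OF orth_commute[OF orth_LC] order_refl]
      orth_mono[OF orth_commute[OF orth_HL_VR] order_refl] by simp_all
  moreover have "orth ip VL {r}"
  proof (unfold orth_def, intro ballI)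
    fix s b
    assume "s \<in> VL" "b \<in> {r}"
    then have "ip s (y - PL y) = 0" "ip s (y - PVL y) = 0" "b = (y - PVL y) - (y - PL y)"
      using VL_subset proj_residual_orth[OF has_orth_proj_HL] proj_residual_orth[OF has_orth_proj_VL]
      unfolding r_def by auto
    then show "ip s b = 0"
      by (simp add: ip_diff_right)
  qed
  ultimately show ?thesis
    using orth_ssum_left[OF orth_ssum_left] residual_SLC[OF assms] unfolding r_def by simp
qed

lemma residual_SCR_orth_V:
  assumes "y \<in> KCR"
  shows "orth ip V {y - proj ip SCR y}"
proof -
  define r where "r = y - proj ip SCR y"
  have SCR_r: "orth ip SCR {r}"
    unfolding orth_def r_def using proj_residual_orth[OF has_orth_proj_SCR] by simp
  have "PVR y \<in> HR"
    using proj_in[OF has_orth_proj_VR] VR_subset by blast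
  then have "{r} \<subseteq> HR"
    unfolding r_def residual_SCR[OF assms]
    using csub_diff[OF has_orth_proj_csub[OF has_orth_proj_HR]] proj_in[OF has_orth_proj_HR]
    by simp
  then have "orth ip VL {r}"
    using orth_mono[OF orth_VL_HR order_refl] by simp
  moreover have "orth ip HC {r}" "orth ip VR {r}"
    using orth_mono[OF SCR_r ssum_subset_left[OF has_orth_proj_csub[OF has_orth_proj_VR]] order_refl]
      orth_mono[OF SCR_r ssum_subset_right[OF has_orth_proj_csub[OF has_orth_proj_HC]] order_refl] .
  ultimately show ?thesis
    using orth_ssum_left[OF orth_ssum_left] unfolding r_def by simp
qed

lemma proj_V_glue:
  assumes y1: "y1 \<in> KLC" and y2: "y2 \<in> KCR"
  shows "proj ip V (PL y1 + y2) = PVL y1 + proj ip SCR y2"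
proof -
  have "orth ip V {(y1 - proj ip SLC y1) + (y2 - proj ip SCR y2)}"
    using residual_SLC_orth_V[OF y1] residual_SCR_orth_V[OF y2]
    unfolding orth_def by (simp add: ip_add_right)
  moreover have "PVL y1 + proj ip SCR y2 \<in> V"
    unfolding proj_SCR add.assoc[symmetric]
    by (intro ssum_mem proj_in has_orth_proj_VL has_orth_proj_HC has_orth_proj_VR)
  moreover have "PL y1 + y2
      = (PVL y1 + proj ip SCR y2) + ((y1 - proj ip SLC y1) + (y2 - proj ip SCR y2))"
    using residual_SLC[OF y1] by (simp add: algebra_simps)
  ultimately show ?thesis
    using proj_eq_of_orth[OF has_orth_proj_csub[OF has_orth_proj_V]] by (metis singletonI)
qed

lemma resolvent_glue:
  assumes x: "x \<in> V"
    and y1: "y1 \<in> KLC" "ULC y1 - sc z (y1 - proj ip SLC y1) = proj ip SLC x"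
    and y2: "y2 \<in> KCR" "UCR y2 - sc z (y2 - proj ip SCR y2) = PC y1 + PVR x"
  shows "U (PL y1 + y2) - sc z (PL y1 + y2 - proj ip V (PL y1 + y2)) = x"
proof -
  define r1 where "r1 = y1 - proj ip SLC y1"
  define r2 where "r2 = y2 - proj ip SCR y2"
  have "PVR x \<in> HR" "PVR y2 \<in> HR"
    using proj_in[OF has_orth_proj_VR] VR_subset by blast+
  then have "PVR x + sc z r2 \<in> HR"
    unfolding r2_def residual_SCR[OF y2(1)]
    using has_orth_proj_csub[OF has_orth_proj_HR]
    by (simp add: csub_add csub_sc csub_diff proj_in[OF has_orth_proj_HR])
  moreover have "UCR y2 = PC y1 + (PVR x + sc z r2)"
    using y2(2) unfolding r2_def by (simp add: algebra_simps)
  ultimately have "U (PL y1 + y2) = ULC y1 + (PVR x + sc z r2)"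
    using U_glue[OF y1(1) y2(1)] by blast
  also have "\<dots> = (proj ip SLC x + PVR x) + sc z (r1 + r2)"
    using y1(2) unfolding r1_def[symmetric] by (simp add: sc_add_right algebra_simps)
  also have "proj ip SLC x + PVR x = x"
    using proj_V proj_id[OF has_orth_proj_csub[OF has_orth_proj_V] x] by simp
  finally show ?thesis
    unfolding proj_V_glue[OF y1(1) y2(1)] r1_def r2_def
    using residual_SLC[OF y1(1)] by (simp add: algebra_simps)
qed

lemma schur_factorization:
  assumes z: "cmod z < 1" and x: "x \<in> V"
  shows "schur sc ip U UNIV V z x =
    (let w = schur sc ip ULC KLC SLC z (proj ip SLC x) + PVR x
     in PVL w + schur sc ip UCR KCR SCR z (proj ip SCR w))"
proof -
  note csub = has_orth_proj_csub
  have "SLC \<subseteq> KLC" "SCR \<subseteq> KCR"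
    using VL_subset VR_subset unfolding ssum_def by blast+
  have "proj ip SLC x \<in> KLC"
    using proj_in[OF has_orth_proj_SLC] \<open>SLC \<subseteq> KLC\<close> by blast
  then obtain y1 where y1: "y1 \<in> KLC" "ULC y1 - sc z (y1 - proj ip SLC y1) = proj ip SLC x"
    using resolvent_exists[OF has_orth_proj_KLC has_orth_proj_SLC \<open>SLC \<subseteq> KLC\<close> unitary_LC z]
    by blast
  have w2_SCR: "PC y1 + PVR x \<in> SCR"
    by (intro ssum_mem proj_in has_orth_proj_HC has_orth_proj_VR)
  then obtain y2 where y2: "y2 \<in> KCR" "UCR y2 - sc z (y2 - proj ip SCR y2) = PC y1 + PVR x"
    using resolvent_exists[OF has_orth_proj_KCR has_orth_proj_SCR \<open>SCR \<subseteq> KCR\<close> unitary_CR z]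
      \<open>SCR \<subseteq> KCR\<close> by blast
  have "schur sc ip U UNIV V z x = PVL y1 + proj ip SCR y2"
    using schur_eqI[OF csub_UNIV isometry_on_U has_orth_proj_V z UNIV_I resolvent_glue[OF x y1 y2]]
    by (simp add: proj_V_glue[OF y1(1) y2(1)])
  moreover have "schur sc ip ULC KLC SLC z (proj ip SLC x) + PVR x = PVL y1 + (PC y1 + PVR x)"
    using schur_eqI[OF csub[OF has_orth_proj_KLC] unitary_on_isometry_on[OF unitary_LC]
        has_orth_proj_SLC z y1] csub[OF has_orth_proj_KLC]
    by (simp add: proj_SLC add.assoc)
  moreover have "PVL (PVL y1 + (PC y1 + PVR x)) = PVL y1"
    using proj_eq_of_orth[OF csub[OF has_orth_proj_VL] proj_in[OF has_orth_proj_VL] orth_VL_SCR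
        w2_SCR] .
  moreover have "proj ip SCR (PVL y1 + (PC y1 + PVR x)) = PC y1 + PVR x"
    using proj_eq_of_orth[OF csub[OF has_orth_proj_SCR] w2_SCR orth_commute[OF orth_VL_SCR]
        proj_in[OF has_orth_proj_VL]] by (simp add: add.commute)
  moreover have "schur sc ip UCR KCR SCR z (PC y1 + PVR x) = proj ip SCR y2"
    using schur_eqI[OF csub[OF has_orth_proj_KCR] unitary_on_isometry_on[OF unitary_CR]
        has_orth_proj_SCR z y2] csub[OF has_orth_proj_KCR] by simp
  ultimately show ?thesis
    by (simp add: Let_def add.assoc)
qed

end

context unitary_three_block
begin

lemma schur_factorization_center:
  assumes z: "cmod z < 1" and x: "x \<in> HC"
  shows "schur sc ip U UNIV HC z x = schur sc ip UCR KCR HC z (schur sc ip ULC KLC HC z x)"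
proof -
  interpret center: unitary_three_block_restriction sc ip HL HC HR ULC UCR U "{0}" "{0}"
    using closed_csubspace_zero csub_zero[OF has_orth_proj_csub] has_orth_proj_HL has_orth_proj_HR
    by unfold_locales blast+
  have csub_HC: "csub HC"
    using has_orth_proj_csub[OF has_orth_proj_HC] .
  have "schur sc ip ULC KLC HC z x \<in> HC"
    using schur_in[OF has_orth_proj_HC] .
  then show ?thesis
    using center.schur_factorization[OF z] x
    by (simp add: ssum_zero_left[OF csub_HC] ssum_zero_right[OF csub_HC] proj_zero_space
        proj_id[OF csub_HC] Let_def)
qed

end

theorem theorem2p5:
  fixes sc :: "complex \<Rightarrow> 'a::{real_normed_vector,banach} \<Rightarrow> 'a"
    and ip :: "'a \<Rightarrow> 'a \<Rightarrow> complex"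
    and HL HC HR VL VR :: "'a set"
    and U ULC UCR :: "'a \<Rightarrow> 'a"
  assumes hilb: "complex_hilbert sc ip"
    and cL: "closed_csubspace sc HL" and cC: "closed_csubspace sc HC" and cR: "closed_csubspace sc HR"
    and oLC: "orth ip HL HC" and oCR: "orth ip HC HR" and oLR: "orth ip HL HR"
    and decomp: "ssum (ssum HL HC) HR = UNIV"
    and uLC: "unitary_on sc ip (ssum HL HC) ULC"
    and uCR: "unitary_on sc ip (ssum HC HR) UCR"
    and U_def: "\<forall>x. U x =
         (let y = proj ip HL x + UCR (proj ip (ssum HC HR) x)
          in ULC (proj ip (ssum HL HC) y) + proj ip HR y)"
    and cVL: "closed_csubspace sc VL" and VL_sub: "VL \<subseteq> HL"
    and cVR: "closed_csubspace sc VR" and VR_sub: "VR \<subseteq> HR"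
  shows "(\<forall>z. cmod z < 1 \<longrightarrow> (\<forall>x \<in> ssum (ssum VL HC) VR.
            schur sc ip U UNIV (ssum (ssum VL HC) VR) z x =
              (let w = schur sc ip ULC (ssum HL HC) (ssum VL HC) z (proj ip (ssum VL HC) x)
                       + proj ip VR x
               in proj ip VL w
                  + schur sc ip UCR (ssum HC HR) (ssum HC VR) z (proj ip (ssum HC VR) w))))
       \<and> (\<forall>z. cmod z < 1 \<longrightarrow> (\<forall>x \<in> HC.
            schur sc ip U UNIV HC z x =
              schur sc ip UCR (ssum HC HR) HC z (schur sc ip ULC (ssum HL HC) HC z x)))"
proof -
  interpret unitary_three_block_restriction sc ip HL HC HR ULC UCR U VL VR
    by unfold_locales (fact assms)+
  show ?thesis
    using schur_factorization schur_factorization_center by blast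
qed

end
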